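(* Let $|z|<1$. For $l=1,2,3,4$, \[ |V_l(z)|\le \sum_{j=1}^{l} C_{V,l,j}\frac{|\log(1-|z|)|^j}{j!}, \] with $C_{V,1,1}=2$; $C_{V,2,1} = |\lambda/2-2|$, $C_{V,2,2}=4$; $C_{V,3,1} = |\lambda^2/16-\lambda+2|$, $C_{V,3,2} = |3\lambda-12|+|\lambda-4|$, $C_{V,3,3}=8$; $C_{V,4,1} = |\lambda^3/192-\lambda^2/8-\lambda/2-2|+|2\lambda\zeta(3)|$, $C_{V,4,2} = |\lambda^2/8-2\lambda+4|+|\lambda^2/4-4\lambda+12|+|5\lambda^2/8-8\lambda+28|$, $C_{V,4,3} = |2\lambda-8|+|6\lambda-24|+|14\lambda-56|$, $C_{V,4,4}=16$. Moreover, if $|z|\le a<1$ (with $a>0$), then $|V_l(z)|\le D_{l,a}|z|$, where \[ D_{l,a} = \sum_{j=1}^{l} C_{V,l,j}\frac{|\log(1-a)|^j}{a\cdot j!}. \]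
   Context: Let $\lambda = j_{0,1}^2$ ($j_{0,1}$ the first positive zero of $J_0$) and $\zeta$ the Riemann zeta function. For positive integers $m_1,\dots,m_k$ and $|z|<1$, $\mathrm{Li}_{m_1,\dots,m_k}(z) = \sum_{0<n_1<\dots<n_k}\frac{z^{n_k}}{n_1^{m_1}\cdots n_k^{m_k}}$. Define $V_1 = 2\mathrm{Li}_1$, $V_2 = (\frac{\lambda}{2}-2)\mathrm{Li}_2+4\mathrm{Li}_{1,1}$, $V_3 = (\frac{\lambda^2}{16}-\lambda+2)\mathrm{Li}_3+(3\lambda-12)\mathrm{Li}_{1,2}+(\lambda-4)\mathrm{Li}_{2,1}+8\mathrm{Li}_{1,1,1}$, $V_4 = (\frac{\lambda^3}{192}-\frac{\lambda^2}{8}-\frac{\lambda}{2}-2)\mathrm{Li}_4+(\frac{\lambda^2}{8}-2\lambda+4)\mathrm{Li}_{3,1}+(\frac{\lambda^2}{4}-4\lambda+12)\mathrm{Li}_{2,2}+(\frac{5\lambda^2}{8}-8\lambda+28)\mathrm{Li}_{1,3}+(2\lambda-8)\mathrm{Li}_{2,1,1}+(6\lambda-24)\mathrm{Li}_{1,2,1}+(14\lambda-56)\mathrm{Li}_{1,1,2}+16\mathrm{Li}_{1,1,1,1}+2\lambda\zeta(3)\mathrm{Li}_1$. *)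

theory Defs
  imports "HOL-Analysis.Analysis"
begin

definition J0 :: "real \<Rightarrow> real" where
  "J0 x = (\<Sum>k. (-1)^k * (x/2)^(2*k) / (fact k)^2)"

definition j01 :: real where
  "j01 = Inf {x. 0 < x \<and> J0 x = 0}"

definition lam :: real where
  "lam = j01^2"

definition zeta3 :: real where
  "zeta3 = (\<Sum>n. 1 / (real (Suc n))^3)"

text \<open>Multiple polylogarithm Li_{m_1,...,m_k}(z) = sum over 0<n_1<...<n_k of
  z^{n_k} / (n_1^{m_1} ... n_k^{m_k}), grouped by the value n = n_k.\<close>
definition mpl_coef :: "nat list \<Rightarrow> nat \<Rightarrow> real" where
  "mpl_coef ms n = (\<Sum>ns \<in> {ns. length ns = length ms \<and> sorted_wrt (<) ns \<and> 0 \<notin> set ns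
                                  \<and> ns \<noteq> [] \<and> last ns = n}.
                      \<Prod>i<length ms. 1 / (real (ns ! i))^(ms ! i))"

definition Li :: "nat list \<Rightarrow> complex \<Rightarrow> complex" where
  "Li ms z = (\<Sum>n. of_real (mpl_coef ms n) * z^n)"

definition V :: "nat \<Rightarrow> complex \<Rightarrow> complex" where
  "V l z = (if l = 1 then 2 * Li [1] z
    else if l = 2 then of_real (lam/2 - 2) * Li [2] z + 4 * Li [1,1] z
    else if l = 3 then of_real (lam^2/16 - lam + 2) * Li [3] z + of_real (3*lam - 12) * Li [1,2] z
                     + of_real (lam - 4) * Li [2,1] z + 8 * Li [1,1,1] z
    else if l = 4 then of_real (lam^3/192 - lam^2/8 - lam/2 - 2) * Li [4] z
                     + of_real (lam^2/8 - 2*lam + 4) * Li [3,1] z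
                     + of_real (lam^2/4 - 4*lam + 12) * Li [2,2] z
                     + of_real (5*lam^2/8 - 8*lam + 28) * Li [1,3] z
                     + of_real (2*lam - 8) * Li [2,1,1] z
                     + of_real (6*lam - 24) * Li [1,2,1] z
                     + of_real (14*lam - 56) * Li [1,1,2] z
                     + 16 * Li [1,1,1,1] z
                     + of_real (2*lam*zeta3) * Li [1] z
    else 0)"

definition CV :: "nat \<Rightarrow> nat \<Rightarrow> real" where
  "CV l j = (if l = 1 \<and> j = 1 then 2
    else if l = 2 \<and> j = 1 then \<bar>lam/2 - 2\<bar>
    else if l = 2 \<and> j = 2 then 4
    else if l = 3 \<and> j = 1 then \<bar>lam^2/16 - lam + 2\<bar>
    else if l = 3 \<and> j = 2 then \<bar>3*lam - 12\<bar> + \<bar>lam - 4\<bar>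
    else if l = 3 \<and> j = 3 then 8
    else if l = 4 \<and> j = 1 then \<bar>lam^3/192 - lam^2/8 - lam/2 - 2\<bar> + \<bar>2*lam*zeta3\<bar>
    else if l = 4 \<and> j = 2 then \<bar>lam^2/8 - 2*lam + 4\<bar> + \<bar>lam^2/4 - 4*lam + 12\<bar>
                               + \<bar>5*lam^2/8 - 8*lam + 28\<bar>
    else if l = 4 \<and> j = 3 then \<bar>2*lam - 8\<bar> + \<bar>6*lam - 24\<bar> + \<bar>14*lam - 56\<bar>
    else if l = 4 \<and> j = 4 then 16
    else 0)"

definition D :: "nat \<Rightarrow> real \<Rightarrow> real" where
  "D l a = (\<Sum>j=1..l. CV l j * \<bar>ln (1 - a)\<bar>^j / (a * fact j))"

end

theory Submission
  imports Defs
begin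

text \<open>All coefficients of \<open>Li ms\<close> are nonnegative, and since every \<open>m \<ge> 1\<close> they are dominated
  termwise by those of \<open>Li [1,...,1]\<close> (same depth \<open>k\<close>), which is \<open>(- ln (1 - x))^k / k!\<close>.
  Hence \<open>|Li ms z| \<le> (- ln (1 - |z|))^k / k!\<close>, and the triangle inequality over the terms of
  \<open>V l\<close> gives the first bound. Instead of identifying the power series of
  \<open>(- ln (1 - x))^k / k!\<close>, we show that the partial sums of the expected series stay
  below it by comparing derivatives. The second bound comes from convexity of \<open>- ln (1 - x)\<close>, which
  vanishes at 0: \<open>- ln (1 - x) \<le> (x / a) (- ln (1 - a))\<close> for \<open>0 \<le> x \<le> a\<close>.\<close>

definition mpl_tuples :: "nat list \<Rightarrow> nat \<Rightarrow> nat list set" where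
  "mpl_tuples ms n = {ns. length ns = length ms \<and> sorted_wrt (<) ns \<and> 0 \<notin> set ns
                          \<and> ns \<noteq> [] \<and> last ns = n}"

lemma mpl_coef_eq_sum_tuples:
  "mpl_coef ms n = (\<Sum>ns\<in>mpl_tuples ms n. \<Prod>i<length ms. 1 / real (ns ! i) ^ (ms ! i))"
  by (simp add: mpl_coef_def mpl_tuples_def)

lemma mpl_coef_nonneg: "0 \<le> mpl_coef ms n"
  unfolding mpl_coef_def by (intro sum_nonneg prod_nonneg) auto

lemma sorted_wrt_less_le_last:
  fixes ns :: "'a::order list"
  assumes "sorted_wrt (<) ns" "x \<in> set ns"
  shows "x \<le> last ns"
  using assms by (cases ns rule: rev_cases) (auto simp: sorted_wrt_append less_imp_le)

lemma finite_mpl_tuples: "finite (mpl_tuples ms n)"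
proof (rule finite_subset)
  show "mpl_tuples ms n \<subseteq> {ns. set ns \<subseteq> {..n} \<and> length ns = length ms}"
    using sorted_wrt_less_le_last by (fastforce simp: mpl_tuples_def)
  show "finite {ns. set ns \<subseteq> {..n} \<and> length ns = length ms}"
    by (rule finite_lists_length_eq) auto
qed

lemma mpl_coef_singleton: "mpl_coef [m] n = (if n = 0 then 0 else 1 / real n ^ m)"
proof -
  have "mpl_tuples [m] n = (if n = 0 then {} else {[n]})"
    by (auto simp: mpl_tuples_def length_Suc_conv)
  then show ?thesis by (simp add: mpl_coef_eq_sum_tuples)
qed

lemma mpl_tuples_snoc:
  assumes "ms \<noteq> []" "n > 0"
  shows "mpl_tuples (ms @ [m]) n = (\<lambda>ns. ns @ [n]) ` (\<Union>j<n. mpl_tuples ms j)"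
proof (intro set_eqI iffI)
  fix ns assume ns: "ns \<in> mpl_tuples (ms @ [m]) n"
  define bs where "bs = butlast ns"
  have ns_eq: "ns = bs @ [n]"
    using ns by (auto simp: mpl_tuples_def bs_def)
  have "bs \<noteq> []" "length bs = length ms"
    using ns assms(1) by (auto simp: mpl_tuples_def ns_eq)
  moreover have "sorted_wrt (<) bs" "\<forall>y\<in>set bs. y < n" "0 \<notin> set bs"
    using ns by (auto simp: mpl_tuples_def ns_eq sorted_wrt_append)
  ultimately have "bs \<in> mpl_tuples ms (last bs)" "last bs < n"
    by (auto simp: mpl_tuples_def)
  then show "ns \<in> (\<lambda>ns. ns @ [n]) ` (\<Union>j<n. mpl_tuples ms j)"
    unfolding ns_eq by blast
next
  fix ns assume "ns \<in> (\<lambda>ns. ns @ [n]) ` (\<Union>j<n. mpl_tuples ms j)"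
  then obtain bs j where bs: "ns = bs @ [n]" "j < n" "bs \<in> mpl_tuples ms j" by blast
  then have "\<forall>x\<in>set bs. x < n"
    using sorted_wrt_less_le_last by (fastforce simp: mpl_tuples_def)
  then show "ns \<in> mpl_tuples (ms @ [m]) n"
    using bs assms(2) by (auto simp: mpl_tuples_def sorted_wrt_append)
qed

lemma mpl_coef_snoc:
  assumes "ms \<noteq> []"
  shows "mpl_coef (ms @ [m]) n
           = (if n = 0 then 0 else 1 / real n ^ m * (\<Sum>j<n. mpl_coef ms j))"
proof (cases "n = 0")
  case True
  then have "mpl_tuples (ms @ [m]) n = {}"
    by (auto simp: mpl_tuples_def) (metis last_in_set)
  then show ?thesis using True by (simp add: mpl_coef_eq_sum_tuples)
next
  case False
  define w where "w ns = (\<Prod>i<length ms. 1 / real (ns ! i) ^ (ms ! i))" for ns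
  have tuples: "mpl_tuples (ms @ [m]) n = (\<lambda>ns. ns @ [n]) ` (\<Union>j<n. mpl_tuples ms j)"
    using assms False by (intro mpl_tuples_snoc) auto
  have "mpl_coef (ms @ [m]) n = (\<Sum>ns\<in>(\<Union>j<n. mpl_tuples ms j). w ns * (1 / real n ^ m))"
    unfolding mpl_coef_eq_sum_tuples tuples
    by (subst sum.reindex) (auto simp: inj_on_def w_def mpl_tuples_def prod.lessThan_Suc nth_append)
  also have "\<dots> = (\<Sum>j<n. \<Sum>ns\<in>mpl_tuples ms j. w ns * (1 / real n ^ m))"
    by (rule sum.UNION_disjoint) (auto simp: finite_mpl_tuples, auto simp: mpl_tuples_def)
  also have "\<dots> = 1 / real n ^ m * (\<Sum>j<n. mpl_coef ms j)"
    by (simp add: mpl_coef_eq_sum_tuples w_def sum_distrib_left sum_distrib_right mult.commute)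
  finally show ?thesis using False by simp
qed

text \<open>The Taylor coefficients of \<open>(- ln (1 - x))^k / k!\<close>: the recursion is the
  coefficientwise form of \<open>d/dx (L^(k+1)/(k+1)!) = L^k/k! \<cdot> 1/(1 - x)\<close> with
  \<open>L = - ln (1 - x)\<close>.\<close>

fun log_power_coeff :: "nat \<Rightarrow> nat \<Rightarrow> real" where
  "log_power_coeff 0 n = (if n = 0 then 1 else 0)"
| "log_power_coeff (Suc k) n = (if n = 0 then 0 else (\<Sum>j<n. log_power_coeff k j) / real n)"

lemma log_power_coeff_nonneg: "0 \<le> log_power_coeff k n"
  by (induction k arbitrary: n) (auto intro!: sum_nonneg divide_nonneg_nonneg)

lemma log_power_coeff_one: "n > 0 \<Longrightarrow> log_power_coeff 1 n = 1 / real n"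
  by (simp add: sum.If_cases lessThan_def)

lemma log_power_coeff_Suc_mult:
  "log_power_coeff (Suc k) n * real n = (\<Sum>j<n. log_power_coeff k j)"
  by simp

lemma mpl_coef_le_log_power_coeff:
  assumes "ms \<noteq> []" "\<forall>m\<in>set ms. 1 \<le> m"
  shows "mpl_coef ms n \<le> log_power_coeff (length ms) n"
  using assms
proof (induction ms arbitrary: n rule: rev_induct)
  case (snoc m ms)
  have weight_le: "1 / real n ^ m \<le> 1 / real n" if "n > 0"
    using that snoc.prems by (intro divide_left_mono) (auto simp: self_le_power)
  show ?case
  proof (cases "ms = [] \<or> n = 0")
    case True
    then show ?thesis
      using weight_le
      by (cases "ms = []") (auto simp: mpl_coef_singleton log_power_coeff_one mpl_coef_snoc)
  next
    case False
    then have "mpl_coef (ms @ [m]) n = 1 / real n ^ m * (\<Sum>j<n. mpl_coef ms j)"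
      by (simp add: mpl_coef_snoc)
    also have "\<dots> \<le> 1 / real n * (\<Sum>j<n. log_power_coeff (length ms) j)"
      using snoc False weight_le
      by (intro mult_mono sum_mono) (auto intro!: sum_nonneg mpl_coef_nonneg)
    also have "\<dots> = log_power_coeff (length (ms @ [m])) n"
      using False by simp
    finally show ?thesis .
  qed
qed simp

lemma sum_power_shifted_le:
  fixes t :: real
  assumes "0 \<le> t" "t < 1"
  shows "(\<Sum>n=Suc j..N. t^(n-1)) \<le> t^j / (1 - t)"
proof (cases N)
  case (Suc M)
  have "(\<Sum>n=Suc j..N. t^(n-1)) = (\<Sum>i=j..M. t^i)"
    unfolding Suc sum.shift_bounds_cl_Suc_ivl by simp
  moreover have "(1 - t) * (\<Sum>i=j..M. t^i) \<le> t^j"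
    using sum_gp_multiplied[of j M t] assms by (cases "j \<le> M") auto
  ultimately show ?thesis using assms by (simp add: field_simps)
qed (use assms in simp)

lemma log_power_partial_sum_deriv_le:
  fixes t :: real
  assumes "0 \<le> t" "t < 1"
  shows "(\<Sum>n\<le>N. log_power_coeff (Suc k) n * (real n * t^(n-1)))
           \<le> (\<Sum>n\<le>N. log_power_coeff k n * t^n) / (1 - t)"
proof -
  have "(\<Sum>n\<le>N. log_power_coeff (Suc k) n * (real n * t^(n-1)))
          = (\<Sum>n\<le>N. \<Sum>j<n. log_power_coeff k j * t^(n-1))"
    by (simp add: mult.assoc[symmetric] log_power_coeff_Suc_mult sum_distrib_right
             del: log_power_coeff.simps)
  also have "\<dots> = (\<Sum>j<N. log_power_coeff k j * (\<Sum>n=Suc j..N. t^(n-1)))"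
    by (simp add: sum.nested_swap' sum_distrib_left)
  also have "\<dots> \<le> (\<Sum>j<N. log_power_coeff k j * (t^j / (1 - t)))"
    by (intro sum_mono mult_left_mono sum_power_shifted_le assms log_power_coeff_nonneg)
  also have "\<dots> \<le> (\<Sum>j\<le>N. log_power_coeff k j * (t^j / (1 - t)))"
    using assms
    by (intro sum_mono2) (auto intro!: divide_nonneg_pos mult_nonneg_nonneg log_power_coeff_nonneg)
  also have "\<dots> = (\<Sum>n\<le>N. log_power_coeff k n * t^n) / (1 - t)"
    by (simp add: sum_divide_distrib)
  finally show ?thesis .
qed

lemma has_real_derivative_neg_ln_power:
  fixes t :: real
  assumes "t < 1"
  shows "((\<lambda>t. (- ln (1 - t))^Suc k / fact (Suc k)) has_real_derivative
           (- ln (1 - t))^k / fact k / (1 - t)) (at t)"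
proof -
  have "((\<lambda>t. - ln (1 - t)) has_real_derivative 1 / (1 - t)) (at t)"
    using assms by (auto intro!: derivative_eq_intros)
  from DERIV_cdivide[OF DERIV_power[OF this, of "Suc k"], of "fact (Suc k)"] show ?thesis
    by (simp add: fact_Suc divide_simps mult.commute del: of_nat_Suc)
qed

lemma log_power_partial_sum_le:
  fixes x :: real
  assumes "0 \<le> x" "x < 1"
  shows "(\<Sum>n\<le>N. log_power_coeff k n * x^n) \<le> (- ln (1 - x))^k / fact k"
  using assms
proof (induction k arbitrary: x)
  case 0
  then show ?case by (simp add: atMost_atLeast0 sum.atLeast_Suc_atMost)
next
  case (Suc k)
  define F where "F t = (- ln (1 - t))^Suc k / fact (Suc k)
                          - (\<Sum>n\<le>N. log_power_coeff (Suc k) n * t^n)" for t :: real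
  define F' where "F' t = (- ln (1 - t))^k / fact k / (1 - t)
                          - (\<Sum>n\<le>N. log_power_coeff (Suc k) n * (real n * t^(n-1)))" for t :: real
  have F_deriv: "(F has_real_derivative F' t) (at t)" if "t < 1" for t
    unfolding F_def F'_def
    by (intro DERIV_diff has_real_derivative_neg_ln_power that)
       (auto intro!: derivative_eq_intros sum.cong simp del: log_power_coeff.simps)
  have F'_nonneg: "0 \<le> F' t" if "0 \<le> t" "t < 1" for t
  proof -
    have "(\<Sum>n\<le>N. log_power_coeff (Suc k) n * (real n * t^(n-1)))
            \<le> (\<Sum>n\<le>N. log_power_coeff k n * t^n) / (1 - t)"
      using that by (rule log_power_partial_sum_deriv_le)
    also have "\<dots> \<le> (- ln (1 - t))^k / fact k / (1 - t)"
      using Suc.IH that by (intro divide_right_mono) auto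
    finally show ?thesis by (simp add: F'_def)
  qed
  have F_cont: "isCont F t" if "t \<le> x" for t
    using F_deriv Suc.prems that by (meson DERIV_isCont le_less_trans)
  have "F 0 \<le> F x"
  proof (rule DERIV_nonneg_imp_increasing_open[of 0 x F])
    fix t assume "0 < t" "t < x"
    then show "\<exists>y. (F has_real_derivative y) (at t) \<and> 0 \<le> y"
      using Suc.prems F_deriv F'_nonneg by (meson less_imp_le less_trans)
  next
    show "continuous_on {0..x} F"
      using F_cont by (intro continuous_at_imp_continuous_on) auto
  qed (use Suc.prems in simp)
  moreover have "F 0 = 0"
    by (simp add: F_def)
  ultimately show ?case by (simp add: F_def)
qed

lemma norm_Li_le:
  assumes "ms \<noteq> []" "\<forall>m\<in>set ms. 1 \<le> m" "norm z < 1"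
  shows "norm (Li ms z) \<le> (- ln (1 - norm z))^length ms / fact (length ms)"
proof -
  define c where "c n = mpl_coef ms n * norm z ^ n" for n
  have c_nonneg: "0 \<le> c n" for n
    by (simp add: c_def mpl_coef_nonneg)
  have c_partial_le: "(\<Sum>n<N. c n) \<le> (- ln (1 - norm z))^length ms / fact (length ms)" for N
  proof -
    have "(\<Sum>n<N. c n) \<le> (\<Sum>n\<le>N. c n)"
      using c_nonneg by (intro sum_mono2) auto
    also have "\<dots> \<le> (\<Sum>n\<le>N. log_power_coeff (length ms) n * norm z ^ n)"
      unfolding c_def using mpl_coef_le_log_power_coeff[OF assms(1,2)]
      by (intro sum_mono mult_right_mono) auto
    also have "\<dots> \<le> (- ln (1 - norm z))^length ms / fact (length ms)"
      using assms(3) by (intro log_power_partial_sum_le) auto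
    finally show ?thesis .
  qed
  have "summable c"
    by (rule summableI_nonneg_bounded[OF c_nonneg c_partial_le])
  then have "norm (Li ms z) \<le> suminf c"
    unfolding Li_def
    by (intro norm_suminf_le) (simp_all add: c_def norm_mult norm_power mpl_coef_nonneg)
  also have "\<dots> \<le> (- ln (1 - norm z))^length ms / fact (length ms)"
    by (rule suminf_le_const[OF \<open>summable c\<close> c_partial_le])
  finally show ?thesis .
qed

definition V_terms :: "nat \<Rightarrow> (real \<times> nat list) list" where
  "V_terms l = (if l = 1 then [(2, [1])]
    else if l = 2 then [(lam/2 - 2, [2]), (4, [1,1])]
    else if l = 3 then [(lam^2/16 - lam + 2, [3]), (3*lam - 12, [1,2]), (lam - 4, [2,1]),
                        (8, [1,1,1])]
    else if l = 4 then [(lam^3/192 - lam^2/8 - lam/2 - 2, [4]), (lam^2/8 - 2*lam + 4, [3,1]),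
                        (lam^2/4 - 4*lam + 12, [2,2]), (5*lam^2/8 - 8*lam + 28, [1,3]),
                        (2*lam - 8, [2,1,1]), (6*lam - 24, [1,2,1]), (14*lam - 56, [1,1,2]),
                        (16, [1,1,1,1]), (2*lam*zeta3, [1])]
    else [])"

lemma V_eq_sum_V_terms:
  "l \<in> {1..4} \<Longrightarrow> V l z = (\<Sum>(c, ms)\<leftarrow>V_terms l. of_real c * Li ms z)"
  by (auto simp: V_def V_terms_def)

lemma CV_eq_sum_V_terms:
  "l \<in> {1..4} \<Longrightarrow> CV l j = (\<Sum>(c, ms)\<leftarrow>V_terms l. if length ms = j then \<bar>c\<bar> else 0)"
  by (auto simp: CV_def V_terms_def)

lemma V_terms_wellformed:
  "\<forall>(c, ms)\<in>set (V_terms l). ms \<noteq> [] \<and> (\<forall>m\<in>set ms. 1 \<le> m) \<and> length ms \<le> l"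
  by (auto simp: V_terms_def)

lemma norm_sum_list_Li_le:
  assumes "\<forall>(c, ms)\<in>set ts. ms \<noteq> [] \<and> (\<forall>m\<in>set ms. 1 \<le> m) \<and> length ms \<le> l"
    and "norm z < 1"
  shows "norm (\<Sum>(c, ms)\<leftarrow>ts. of_real c * Li ms z)
           \<le> (\<Sum>j=1..l. (\<Sum>(c, ms)\<leftarrow>ts. if length ms = j then \<bar>c\<bar> else 0)
                         * (- ln (1 - norm z))^j / fact j)"
  using assms(1)
proof (induction ts)
  case (Cons t ts)
  obtain c ms where t: "t = (c, ms)" by fastforce
  define G where "G j = (- ln (1 - norm z))^j / fact j" for j :: nat
  have ms: "ms \<noteq> []" "\<forall>m\<in>set ms. 1 \<le> m" "length ms \<in> {1..l}"
    using Cons.prems by (auto simp: t Suc_le_eq)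
  have IH: "norm (\<Sum>(c, ms)\<leftarrow>ts. of_real c * Li ms z)
              \<le> (\<Sum>j=1..l. (\<Sum>(c, ms)\<leftarrow>ts. if length ms = j then \<bar>c\<bar> else 0) * G j)"
    using Cons by (simp add: G_def)
  have "norm (Li ms z) \<le> G (length ms)"
    using norm_Li_le[OF ms(1,2) assms(2)] by (simp add: G_def)
  then have "norm (\<Sum>(c, ms)\<leftarrow>t # ts. of_real c * Li ms z)
               \<le> \<bar>c\<bar> * G (length ms) + norm (\<Sum>(c, ms)\<leftarrow>ts. of_real c * Li ms z)"
    by (auto simp: t norm_mult intro!: order_trans[OF norm_triangle_ineq] mult_left_mono)
  also have "\<dots> \<le> (\<Sum>j=1..l. (if length ms = j then \<bar>c\<bar> else 0) * G j)
                  + (\<Sum>j=1..l. (\<Sum>(c, ms)\<leftarrow>ts. if length ms = j then \<bar>c\<bar> else 0) * G j)"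
    using IH ms(3) by (simp add: if_distrib[of "\<lambda>x. x * _"] sum.delta' cong: if_cong)
  finally show ?case
    by (simp add: t G_def sum.distrib[symmetric] distrib_right add_divide_distrib)
qed simp

lemma norm_V_le:
  assumes "l \<in> {1..4}" "norm z < 1"
  shows "norm (V l z) \<le> (\<Sum>j=1..l. CV l j * (- ln (1 - norm z))^j / fact j)"
  using norm_sum_list_Li_le[OF V_terms_wellformed assms(2)] assms(1)
  by (simp add: V_eq_sum_V_terms CV_eq_sum_V_terms)

lemma neg_ln_one_minus_le_linear:
  fixes x a :: real
  assumes "0 \<le> x" "x \<le> a" "a < 1"
  shows "- ln (1 - x) * a \<le> - ln (1 - a) * x"
proof (cases "a = 0")
  case False
  define t where "t = x / a"
  have t: "0 \<le> t" "t \<le> 1" "x = t * a"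
    using assms False by (auto simp: t_def)
  have "(1 - t) * ln 1 + t * ln (1 - a) \<le> ln ((1 - t) *\<^sub>R 1 + t *\<^sub>R (1 - a))"
    using t assms by (intro concave_onD[OF ln_concave]) auto
  moreover have "(1 - t) *\<^sub>R 1 + t *\<^sub>R (1 - a) = 1 - x"
    using t by (simp add: algebra_simps)
  ultimately have "t * ln (1 - a) \<le> ln (1 - x)"
    by (metis ln_one mult_zero_right add_0)
  then have "a * (t * ln (1 - a)) \<le> a * ln (1 - x)"
    using assms by (intro mult_left_mono) auto
  then show ?thesis
    using t by (simp add: algebra_simps)
qed (use assms in simp)

lemma neg_ln_one_minus_power_le_linear:
  fixes x a :: real
  assumes "0 \<le> x" "x \<le> a" "a < 1" "j \<ge> 1"
  shows "(- ln (1 - x))^j * a \<le> (- ln (1 - a))^j * x"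
proof -
  obtain i where j: "j = Suc i"
    using assms(4) by (cases j) auto
  have "(- ln (1 - x))^i \<le> (- ln (1 - a))^i"
    using assms by (intro power_mono) auto
  moreover have "- ln (1 - x) * a \<le> - ln (1 - a) * x"
    using assms(1-3) by (rule neg_ln_one_minus_le_linear)
  moreover have "0 \<le> (- ln (1 - a))^i" "0 \<le> - ln (1 - x) * a"
    using assms by (auto intro!: mult_nonpos_nonneg)
  ultimately have "(- ln (1 - x))^i * (- ln (1 - x) * a) \<le> (- ln (1 - a))^i * (- ln (1 - a) * x)"
    by (rule mult_mono)
  then show ?thesis
    by (simp add: j mult_ac)
qed

lemma sum_neg_ln_powers_le_linear:
  fixes x a :: real
  assumes "\<And>j. 0 \<le> C j" "0 \<le> x" "x \<le> a" "0 < a" "a < 1"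
  shows "(\<Sum>j=1..l. C j * (- ln (1 - x))^j / fact j)
           \<le> (\<Sum>j=1..l. C j * \<bar>ln (1 - a)\<bar>^j / (a * fact j)) * x"
proof -
  have "C j * (- ln (1 - x))^j / fact j \<le> C j * \<bar>ln (1 - a)\<bar>^j / (a * fact j) * x"
    if "j \<ge> 1" for j
  proof -
    have "(- ln (1 - x))^j \<le> (- ln (1 - a))^j * x / a"
      using neg_ln_one_minus_power_le_linear[of x a j] assms that by (simp add: pos_le_divide_eq)
    then have "C j * (- ln (1 - x))^j / fact j \<le> C j * ((- ln (1 - a))^j * x / a) / fact j"
      using assms(1) by (intro divide_right_mono mult_left_mono) auto
    then show ?thesis
      using assms by (simp add: field_simps)
  qed
  then show ?thesis
    by (auto simp: sum_distrib_right intro!: sum_mono)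
qed

theorem lemmaA2:
  fixes l :: nat and z :: complex
  assumes "l \<in> {1..4}" and "norm z < 1"
  shows "norm (V l z) \<le> (\<Sum>j=1..l. CV l j * \<bar>ln (1 - norm z)\<bar>^j / fact j) \<and>
         (\<forall>a::real. 0 < a \<and> a < 1 \<and> norm z \<le> a \<longrightarrow> norm (V l z) \<le> D l a * norm z)"
proof (intro conjI allI impI)
  have bound: "norm (V l z) \<le> (\<Sum>j=1..l. CV l j * (- ln (1 - norm z))^j / fact j)"
    using assms by (rule norm_V_le)
  then show "norm (V l z) \<le> (\<Sum>j=1..l. CV l j * \<bar>ln (1 - norm z)\<bar>^j / fact j)"
    using assms(2) by simp
  fix a :: real assume "0 < a \<and> a < 1 \<and> norm z \<le> a"
  moreover have "0 \<le> CV l j" for j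
    by (simp add: CV_def)
  ultimately show "norm (V l z) \<le> D l a * norm z"
    using order_trans[OF bound sum_neg_ln_powers_le_linear[of "CV l"]] by (simp add: D_def)
qed

end
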